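(* Let $\mathcal{N}$ be a Beeping Network with $n$ nodes and maximum degree $\Delta$, with unique IDs from $[1,n^c]$ for a constant $c\ge1$, where each node knows $n$, $c$, $\Delta$, $h$ and an upper bound $B$ on the size in bits of each input message. There is a deterministic distributed algorithm solving the $B$-bit $h$-hop simulation problem on $\mathcal{N}$ in $O(h\cdot B\Delta^{h+2}\,\mathrm{polylog}\, n)$ rounds.
   Context: A Beeping Network is a network of $n$ nodes whose topology is an undirected graph $G=(V,E)$. Time is divided into synchronous rounds and all nodes start simultaneously. In each round every node either beeps or listens; a listening node hears "silence" if no neighbor beeps and "noise" if at least one neighbor beeps, and cannot distinguish one beep from several. $B$-bit $h$-hop simulation: each node holds messages (possibly different for different destinations) of at most $B$ bits addressed to other nodes, and must deliver each such message to its destination whenever the destination is within distance $h$ (hops) of the source; messages to nodes at distance more than $h$ need not be delivered. $\mathrm{polylog}\, n$ denotes a fixed polylogarithmic function of $n$. *)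

theory Defs
  imports Complex_Main
begin

text \<open>Beeping network model. Nodes are identified by their IDs (natural numbers).
  The topology is a symmetric irreflexive adjacency relation E on a finite vertex set V.\<close>

definition undirected_graph :: "nat set \<Rightarrow> (nat \<Rightarrow> nat \<Rightarrow> bool) \<Rightarrow> bool" where
  "undirected_graph V E \<longleftrightarrow> finite V \<and> (\<forall>x y. E x y \<longrightarrow> x \<in> V \<and> y \<in> V \<and> x \<noteq> y \<and> E y x)"

definition degree :: "(nat \<Rightarrow> nat \<Rightarrow> bool) \<Rightarrow> nat \<Rightarrow> nat" where
  "degree E v = card {w. E v w}"

definition max_degree_is :: "nat set \<Rightarrow> (nat \<Rightarrow> nat \<Rightarrow> bool) \<Rightarrow> nat \<Rightarrow> bool" where
  "max_degree_is V E \<Delta> \<longleftrightarrow> (\<forall>v\<in>V. degree E v \<le> \<Delta>) \<and> (\<exists>v\<in>V. degree E v = \<Delta>)"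

definition within_hops :: "(nat \<Rightarrow> nat \<Rightarrow> bool) \<Rightarrow> nat \<Rightarrow> nat \<Rightarrow> nat \<Rightarrow> bool" where
  "within_hops E h u v \<longleftrightarrow> (\<exists>k\<le>h. (u, v) \<in> {(x, y). E x y} ^^ k)"

text \<open>Execution of a deterministic beeping protocol. act v H: does node v beep in the
  current round, given its history H of what it heard in previous rounds (node-local
  knowledge such as its ID, inputs and global parameters is baked into act v).
  A listening node hears noise (True) iff some neighbour beeps; a beeping node
  receives no feedback (recorded as False).  exec act E r v = history of v after r rounds.\<close>
fun exec :: "(nat \<Rightarrow> bool list \<Rightarrow> bool) \<Rightarrow> (nat \<Rightarrow> nat \<Rightarrow> bool) \<Rightarrow> nat \<Rightarrow> nat \<Rightarrow> bool list" where
  "exec act E 0 = (\<lambda>v. [])"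
| "exec act E (Suc r) = (\<lambda>v. exec act E r v @
      [\<not> act v (exec act E r v) \<and> (\<exists>w. E v w \<and> act w (exec act E r w))])"

text \<open>Global parameters known to every node: (n, c, Delta, h, B).\<close>
type_synonym params = "nat \<times> real \<times> nat \<times> nat \<times> nat"

text \<open>A deterministic distributed algorithm: a beep rule and an output rule, each a
  function of the global parameters, the node's own ID, its input messages
  (destination ID \<mapsto> message) and its history of heard signals.  The output maps a
  source ID to the message received from that source.\<close>
type_synonym beep_rule = "params \<Rightarrow> nat \<Rightarrow> (nat \<Rightarrow> bool list option) \<Rightarrow> bool list \<Rightarrow> bool"
type_synonym output_rule = "params \<Rightarrow> nat \<Rightarrow> (nat \<Rightarrow> bool list option) \<Rightarrow> bool list \<Rightarrow> (nat \<Rightarrow> bool list option)"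

text \<open>The algorithm solves B-bit h-hop simulation on (V,E) with inputs m within T rounds.
  m u v = Some x: node u holds message x (at most B bits) for destination v.\<close>
definition solves_simulation ::
  "beep_rule \<Rightarrow> output_rule \<Rightarrow> params \<Rightarrow> nat \<Rightarrow> nat set \<Rightarrow> (nat \<Rightarrow> nat \<Rightarrow> bool)
     \<Rightarrow> (nat \<Rightarrow> nat \<Rightarrow> bool list option) \<Rightarrow> bool" where
  "solves_simulation act out p T V E m \<longleftrightarrow>
     (let H = exec (\<lambda>v. act p v (m v)) E T; h = fst (snd (snd (snd p))) in
      \<forall>u\<in>V. \<forall>v\<in>V. \<forall>x. u \<noteq> v \<longrightarrow> within_hops E h u v \<longrightarrow> m u v = Some x \<longrightarrow>
         out p v (m v) (H v) u = Some x)"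

end

theory Submission
  imports Defs "HOL-Library.FuncSet"
begin

text \<open>The algorithm runs \<open>2h\<close> phases, in each of which every node broadcasts one payload, a set
  of at most \<open>4\<Delta>\<^sup>h\<close> messages, to all its neighbours. A phase has \<open>K * Q\<close> slots: in slot \<open>(j, q)\<close>
  the nodes of colour \<open>q\<close> in the \<open>j\<close>-th of \<open>K = O(\<Delta> log n)\<close> colourings with \<open>Q = 2\<Delta>\<close> colours
  transmit their payload in Manchester code. By the probabilistic method there are colourings
  separating every node from every \<open>\<Delta>\<close> other nodes, so each neighbour \<open>u\<close> of \<open>v\<close> owns a slot
  in which it is the only transmitter in the closed neighbourhood of \<open>v\<close>; conversely, a slot
  that \<open>v\<close> hears as a valid Manchester code carries the payload of a single neighbour, since
  superimposed distinct codewords are detected. In phases \<open>0, \<dots>, h - 1\<close> the nodes learn their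
  \<open>h\<close>-hop balls; in phases \<open>h, \<dots>, 2h - 1\<close> they forward every message whose destination is still
  close enough, so that finally each node knows all messages addressed to it from within \<open>h\<close>
  hops. Each payload takes \<open>O(\<Delta>\<^sup>h (log n + B))\<close> bits, which gives
  \<open>2h * K * Q * O(\<Delta>\<^sup>h (log n + B)) = O(h B \<Delta>\<^sup>h\<^sup>+\<^sup>2 log\<^sup>2 n)\<close> rounds.\<close>

section \<open>Separating colourings\<close>

lemma card_bounded_subsets_le:
  assumes "finite U"
  shows "card {S. S \<subseteq> U \<and> card S \<le> d} \<le> (card U + 1) ^ d"
proof -
  let ?A = "insert None (Some ` U)"
  let ?L = "{xs. set xs \<subseteq> ?A \<and> length xs = d}"
  have sub: "{S. S \<subseteq> U \<and> card S \<le> d} \<subseteq> (\<lambda>xs. {x. Some x \<in> set xs}) ` ?L"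
  proof
    fix S assume S: "S \<in> {S. S \<subseteq> U \<and> card S \<le> d}"
    then have "finite S" using assms finite_subset by blast
    then obtain ys where ys: "set ys = S" "distinct ys" using finite_distinct_list by blast
    define xs where "xs = map Some ys @ replicate (d - length ys) None"
    have "length ys = card S" using ys distinct_card by metis
    then have "length xs = d" using S by (simp add: xs_def)
    moreover have "set xs \<subseteq> insert None (Some ` S)"
      using ys(1) by (auto simp: xs_def)
    ultimately have "xs \<in> ?L" using S by blast
    moreover have "{x. Some x \<in> set xs} = S" using ys(1) by (auto simp: xs_def)
    ultimately show "S \<in> (\<lambda>xs. {x. Some x \<in> set xs}) ` ?L" by blast
  qed
  have finA: "finite ?A" using assms by blast
  then have fin: "finite ?L" by (rule finite_lists_length_eq)
  have "card {S. S \<subseteq> U \<and> card S \<le> d} \<le> card ((\<lambda>xs. {x. Some x \<in> set xs}) ` ?L)"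
    using finite_imageI[OF fin] sub by (rule card_mono)
  also have "\<dots> \<le> card ?L" using fin by (rule card_image_le)
  also have "\<dots> = card ?A ^ d" using finA by (rule card_lists_length_eq)
  also have "card ?A = card U + 1" using assms by (simp add: card_image)
  finally show ?thesis .
qed

lemma card_PiE_collision_le:
  assumes "finite D" "finite C" "u \<in> D" "w \<in> D" "u \<noteq> w"
  shows "card {f \<in> D \<rightarrow>\<^sub>E C. f u = f w} \<le> card C ^ (card D - 1)"
proof -
  let ?A = "{f \<in> D \<rightarrow>\<^sub>E C. f u = f w}"
  have inj: "inj_on (\<lambda>f. restrict f (D - {u})) ?A"
  proof (rule inj_onI)
    fix f g assume f: "f \<in> ?A" and g: "g \<in> ?A"
      and eq: "restrict f (D - {u}) = restrict g (D - {u})"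
    have agree: "f x = g x" if "x \<in> D" "x \<noteq> u" for x
      using fun_cong[OF eq, of x] that by simp
    have "f u = g u" using agree[of w] f g assms by simp
    have "f \<in> D \<rightarrow>\<^sub>E C" "g \<in> D \<rightarrow>\<^sub>E C" using f g by auto
    then show "f = g"
    proof (rule PiE_ext)
      fix x assume "x \<in> D"
      then show "f x = g x" using agree \<open>f u = g u\<close> by (cases "x = u") auto
    qed
  qed
  have img: "(\<lambda>f. restrict f (D - {u})) ` ?A \<subseteq> (D - {u}) \<rightarrow>\<^sub>E C"
    by (intro image_subsetI) (simp add: restrict_PiE_iff PiE_iff)
  have "card ?A \<le> card ((D - {u}) \<rightarrow>\<^sub>E C)"
    by (rule card_inj_on_le[OF inj img]) (simp add: finite_PiE assms(1,2))
  also have "\<dots> = card C ^ (card D - 1)" using assms by (simp add: card_PiE)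
  finally show ?thesis .
qed

lemma card_PiE_collision_set_le:
  assumes "finite D" "finite C" "u \<in> D" "S \<subseteq> D" "u \<notin> S"
  shows "card {f \<in> D \<rightarrow>\<^sub>E C. f u \<in> f ` S} \<le> card S * card C ^ (card D - 1)"
proof -
  have "{f \<in> D \<rightarrow>\<^sub>E C. f u \<in> f ` S} = (\<Union>w\<in>S. {f \<in> D \<rightarrow>\<^sub>E C. f u = f w})" by auto
  also have "card \<dots> \<le> (\<Sum>w\<in>S. card {f \<in> D \<rightarrow>\<^sub>E C. f u = f w})"
    using finite_subset[OF assms(4,1)] by (rule card_UN_le)
  also have "\<dots> \<le> (\<Sum>w\<in>S. card C ^ (card D - 1))"
  proof (rule sum_mono)
    fix w assume "w \<in> S"
    show "card {f \<in> D \<rightarrow>\<^sub>E C. f u = f w} \<le> card C ^ (card D - 1)"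
      by (rule card_PiE_collision_le) (use assms \<open>w \<in> S\<close> in auto)
  qed
  also have "\<dots> = card S * card C ^ (card D - 1)" by simp
  finally show ?thesis .
qed

text \<open>The union bound behind the probabilistic method: if each of fewer than \<open>2 ^ K\<close>
  events has probability at most \<open>1/2\<close> in \<open>X\<close>, some \<open>K\<close> independent samples from \<open>X\<close>
  avoid every event at least once.\<close>

lemma exists_PiE_avoiding:
  assumes "finite X" "X \<noteq> {}" "finite I" "card I < 2 ^ K"
    and bad: "\<And>i. i \<in> I \<Longrightarrow> Bad i \<subseteq> X \<and> 2 * card (Bad i) \<le> card X"
  shows "\<exists>g \<in> {..<K} \<rightarrow>\<^sub>E X. \<forall>i\<in>I. \<exists>j<K. g j \<notin> Bad i"
proof -
  let ?U = "\<Union>i\<in>I. {..<K} \<rightarrow>\<^sub>E Bad i"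
  have "card ?U \<le> (\<Sum>i\<in>I. card ({..<K} \<rightarrow>\<^sub>E Bad i))"
    using assms(3) by (rule card_UN_le)
  also have "\<dots> = (\<Sum>i\<in>I. card (Bad i) ^ K)" by (simp add: card_PiE)
  finally have "2 ^ K * card ?U \<le> 2 ^ K * (\<Sum>i\<in>I. card (Bad i) ^ K)" by simp
  also have "\<dots> = (\<Sum>i\<in>I. (2 * card (Bad i)) ^ K)"
    by (simp only: sum_distrib_left power_mult_distrib)
  also have "\<dots> \<le> (\<Sum>i\<in>I. card X ^ K)"
  proof (rule sum_mono)
    fix i assume "i \<in> I"
    then show "(2 * card (Bad i)) ^ K \<le> card X ^ K" using bad by (intro power_mono) auto
  qed
  also have "\<dots> = card I * card X ^ K" by simp
  also have "\<dots> < 2 ^ K * card X ^ K"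
    using assms(1,2,4) by (simp add: card_gt_0_iff)
  finally have less: "card ?U < card ({..<K} \<rightarrow>\<^sub>E X)" by (simp add: card_PiE)
  have "finite ?U"
    using assms(1,3) bad by (auto intro!: finite_PiE intro: finite_subset)
  then have "\<not> {..<K} \<rightarrow>\<^sub>E X \<subseteq> ?U"
    using less card_mono leD by blast
  then obtain g where g: "g \<in> {..<K} \<rightarrow>\<^sub>E X" "g \<notin> ?U" by blast
  have "\<exists>j<K. g j \<notin> Bad i" if "i \<in> I" for i
  proof (rule ccontr)
    assume "\<not> (\<exists>j<K. g j \<notin> Bad i)"
    then have "g \<in> {..<K} \<rightarrow>\<^sub>E Bad i" using g(1) by (auto simp: PiE_iff)
    then show False using g(2) that by blast
  qed
  then show ?thesis using g(1) by blast
qed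

definition separating_colourings ::
    "nat set \<Rightarrow> nat \<Rightarrow> nat \<Rightarrow> nat \<Rightarrow> (nat \<Rightarrow> nat \<Rightarrow> nat) \<Rightarrow> bool" where
  "separating_colourings U D K Q F \<longleftrightarrow> (\<forall>j<K. \<forall>u\<in>U. F j u < Q) \<and>
     (\<forall>u\<in>U. \<forall>S. S \<subseteq> U \<longrightarrow> card S \<le> D \<longrightarrow> u \<notin> S \<longrightarrow> (\<exists>j<K. F j u \<notin> F j ` S))"

lemma card_separation_pairs_less:
  assumes "finite U"
  shows "card {(u, S). u \<in> U \<and> S \<subseteq> U \<and> card S \<le> D \<and> u \<notin> S} < (card U + 2) ^ (D + 1)"
proof -
  have "card {(u, S). u \<in> U \<and> S \<subseteq> U \<and> card S \<le> D \<and> u \<notin> S}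
      \<le> card (U \<times> {S. S \<subseteq> U \<and> card S \<le> D})"
    using assms by (intro card_mono) auto
  also have "\<dots> \<le> card U * (card U + 1) ^ D"
    using card_bounded_subsets_le[OF assms] by (simp add: card_cartesian_product)
  also have "\<dots> < (card U + 2) * (card U + 1) ^ D" by simp
  also have "\<dots> \<le> (card U + 2) * (card U + 2) ^ D" by (intro mult_left_mono power_mono) auto
  finally show ?thesis by simp
qed

lemma card_non_separating_le:
  assumes "finite U" "u \<in> U" "S \<subseteq> U" "card S \<le> D" "u \<notin> S"
  shows "2 * card {f \<in> U \<rightarrow>\<^sub>E {..<2 * D}. f u \<in> f ` S} \<le> (2 * D) ^ card U"
proof -
  have "2 * card {f \<in> U \<rightarrow>\<^sub>E {..<2 * D}. f u \<in> f ` S} \<le> 2 * (card S * (2 * D) ^ (card U - 1))"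
    using card_PiE_collision_set_le[OF assms(1) finite_lessThan[of "2 * D"] assms(2,3,5)] by simp
  also have "\<dots> \<le> 2 * D * (2 * D) ^ (card U - 1)" using assms(4) by simp
  also have "\<dots> = (2 * D) ^ card U"
  proof -
    have "card U \<noteq> 0" using assms(1,2) by auto
    then obtain k where "card U = Suc k" using not0_implies_Suc by blast
    then show ?thesis by simp
  qed
  finally show ?thesis .
qed

lemma separating_colourings_exist:
  assumes "finite U" "D \<ge> 1" "card U + 2 \<le> 2 ^ a"
  shows "\<exists>F. separating_colourings U D ((D + 1) * a) (2 * D) F"
proof -
  define X where "X = U \<rightarrow>\<^sub>E {..<2 * D}"
  define I where "I = {(u, S). u \<in> U \<and> S \<subseteq> U \<and> card S \<le> D \<and> u \<notin> S}"
  define Bad where "Bad = (\<lambda>(u, S). {f \<in> X. f u \<in> f ` S})"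
  have cX: "card X = (2 * D) ^ card U" using assms(1) by (simp add: X_def card_PiE)
  have "card I < (card U + 2) ^ (D + 1)"
    unfolding I_def using assms(1) by (rule card_separation_pairs_less)
  also have "\<dots> \<le> (2 ^ a) ^ (D + 1)" using assms(3) by (rule power_mono) simp
  also have "\<dots> = 2 ^ ((D + 1) * a)" by (simp only: mult.commute[of "D + 1" a] power_mult)
  finally have cI: "card I < 2 ^ ((D + 1) * a)" .
  have fI: "finite I"
    using assms(1) by (intro finite_subset[of I "U \<times> Pow U"]) (auto simp: I_def)
  have fX: "finite X" using assms(1) by (simp add: X_def finite_PiE)
  have nX: "X \<noteq> {}" using assms(2) by (simp add: X_def PiE_eq_empty_iff lessThan_empty_iff)
  have badX: "Bad i \<subseteq> X \<and> 2 * card (Bad i) \<le> card X" if "i \<in> I" for i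
  proof (cases i)
    case (Pair u S)
    then have "u \<in> U" "S \<subseteq> U" "card S \<le> D" "u \<notin> S" using that by (simp_all add: I_def)
    then show ?thesis
      using card_non_separating_le[OF assms(1)] unfolding Pair Bad_def cX by (auto simp: X_def)
  qed
  obtain g where g: "g \<in> {..<(D + 1) * a} \<rightarrow>\<^sub>E X"
    and sep: "\<forall>i\<in>I. \<exists>j<(D + 1) * a. g j \<notin> Bad i"
    using exists_PiE_avoiding[where Bad = Bad, OF fX nX fI cI badX] by blast
  have gX: "g j \<in> X" if "j < (D + 1) * a" for j
    using PiE_mem[OF g] that by simp
  have "\<exists>j<(D + 1) * a. g j u \<notin> g j ` S"
    if "u \<in> U" "S \<subseteq> U" "card S \<le> D" "u \<notin> S" for u S
  proof -
    have "(u, S) \<in> I" using that by (simp add: I_def)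
    then obtain j where "j < (D + 1) * a" "g j \<notin> Bad (u, S)" using sep by blast
    then show ?thesis using gX by (auto simp: Bad_def)
  qed
  moreover have "g j u < 2 * D" if "j < (D + 1) * a" "u \<in> U" for j u
    using gX[OF that(1)] that(2) by (auto simp: X_def)
  ultimately have "separating_colourings U D ((D + 1) * a) (2 * D) g"
    unfolding separating_colourings_def by blast
  then show ?thesis by blast
qed

section \<open>Coding message sets by bit strings\<close>

definition bit_code :: "'a set \<Rightarrow> nat \<Rightarrow> 'a \<Rightarrow> bool list" where
  "bit_code A L = (SOME f. f ` A \<subseteq> {xs. length xs = L} \<and> inj_on f A)"

definition bit_decode :: "'a set \<Rightarrow> nat \<Rightarrow> bool list \<Rightarrow> 'a" where
  "bit_decode A L = inv_into A (bit_code A L)"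

lemma bit_code_inj:
  assumes "finite A" "card A \<le> 2 ^ L"
  shows "bit_code A L ` A \<subseteq> {xs. length xs = L} \<and> inj_on (bit_code A L) A"
proof -
  have fin: "finite {xs :: bool list. length xs = L}"
    using finite_lists_length_eq[of "UNIV :: bool set" L] by simp
  have "card {xs :: bool list. length xs = L} = 2 ^ L"
    using card_lists_length_eq[of "UNIV :: bool set" L] by simp
  then have "\<exists>f. f ` A \<subseteq> {xs :: bool list. length xs = L} \<and> inj_on f A"
    using card_le_inj[OF assms(1) fin] assms(2) by simp
  then show ?thesis unfolding bit_code_def by (rule someI_ex)
qed

lemma length_bit_code:
  assumes "finite A" "card A \<le> 2 ^ L" "x \<in> A"
  shows "length (bit_code A L x) = L"
  using bit_code_inj[OF assms(1,2)] assms(3) by blast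

lemma bit_decode_code:
  assumes "finite A" "card A \<le> 2 ^ L" "x \<in> A"
  shows "bit_decode A L (bit_code A L x) = x"
  unfolding bit_decode_def using bit_code_inj[OF assms(1,2)] assms(3) by (simp add: inv_into_f_f)

text \<open>A message is a triple (source, destination, content).\<close>

type_synonym message = "nat \<times> nat \<times> bool list"

definition messages :: "nat \<Rightarrow> nat \<Rightarrow> message set" where
  "messages N B = {..N} \<times> {..N} \<times> {xs. length xs \<le> B}"

definition message_sets :: "nat \<Rightarrow> nat \<Rightarrow> nat \<Rightarrow> message set set" where
  "message_sets N B M = {P. P \<subseteq> messages N B \<and> card P \<le> M}"

lemma finite_messages: "finite (messages N B)"
  using finite_lists_length_le[of "UNIV :: bool set" B] by (simp add: messages_def)

lemma finite_message_sets: "finite (message_sets N B M)"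
  by (rule finite_subset[of _ "Pow (messages N B)"]) (auto simp: message_sets_def finite_messages)

lemma card_message_sets_le:
  assumes "N + 2 \<le> 2 ^ a"
  shows "card (message_sets N B M) \<le> 2 ^ (M * (2 * a + B + 1))"
proof -
  have "card {xs :: bool list. length xs \<le> B} = (\<Sum>i\<le>B. 2 ^ i)"
    using card_lists_length_le[of "UNIV :: bool set" B] by simp
  also have "\<dots> < 2 ^ (B + 1)" by (induction B) auto
  finally have lists: "card {xs :: bool list. length xs \<le> B} < 2 ^ (B + 1)" .
  have "card (messages N B) = (N + 1) * ((N + 1) * card {xs :: bool list. length xs \<le> B})"
    by (simp add: messages_def card_cartesian_product)
  also have "\<dots> < (N + 1) * ((N + 1) * 2 ^ (B + 1))"
    using lists by (intro mult_strict_left_mono) auto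
  also have "\<dots> \<le> 2 ^ a * (2 ^ a * 2 ^ (B + 1))"
    using assms by (intro mult_mono) auto
  also have "\<dots> = 2 ^ (2 * a + B + 1)" by (simp only: power_add mult_2 mult.assoc)
  finally have "card (messages N B) + 1 \<le> 2 ^ (2 * a + B + 1)" by simp
  have "card (message_sets N B M) \<le> (card (messages N B) + 1) ^ M"
    using card_bounded_subsets_le[OF finite_messages] by (simp add: message_sets_def)
  also have "\<dots> \<le> (2 ^ (2 * a + B + 1)) ^ M"
    using \<open>card (messages N B) + 1 \<le> _\<close> by (rule power_mono) simp
  also have "\<dots> = 2 ^ (M * (2 * a + B + 1))" by (simp only: power_mult[symmetric] mult.commute)
  finally show ?thesis .
qed

section \<open>Manchester code\<close>

definition manchester :: "bool list \<Rightarrow> nat \<Rightarrow> bool" where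
  "manchester x i = (if even i then x ! (i div 2) else \<not> x ! (i div 2))"

definition manchester_valid :: "nat \<Rightarrow> (nat \<Rightarrow> bool) \<Rightarrow> nat \<Rightarrow> bool" where
  "manchester_valid L H b \<longleftrightarrow> (\<forall>k<L. H (b + 2 * k) \<noteq> H (b + 2 * k + 1))"

definition manchester_decode :: "nat \<Rightarrow> (nat \<Rightarrow> bool) \<Rightarrow> nat \<Rightarrow> bool list" where
  "manchester_decode L H b = map (\<lambda>k. H (b + 2 * k)) [0..<L]"

lemma manchester_even [simp]: "manchester x (2 * k) = x ! k"
  by (simp add: manchester_def)

lemma manchester_odd [simp]: "manchester x (Suc (2 * k)) = (\<not> x ! k)"
  by (simp add: manchester_def)

lemma manchester_decode_single:
  assumes "length x = L" and H: "\<forall>i<2 * L. H (b + i) = manchester x i"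
  shows "manchester_valid L H b \<and> manchester_decode L H b = x"
proof -
  have "H (b + 2 * k) = x ! k \<and> H (b + 2 * k + 1) = (\<not> x ! k)" if "k < L" for k
    using H[rule_format, of "2 * k"] H[rule_format, of "2 * k + 1"] that by (simp add: add.assoc)
  then show ?thesis
    using assms(1) by (auto simp: manchester_valid_def manchester_decode_def intro: nth_equalityI)
qed

text \<open>If several codewords of equal length are superimposed (a listener hears the OR of
  the beeps), the slot is valid only if all of them coincide: two codewords differing in
  bit \<open>k\<close> make both rounds of the pair \<open>k\<close> noisy.\<close>

lemma manchester_decode_superposition:
  assumes len: "\<forall>w\<in>A. length (c w) = L" and "L \<ge> 1"
    and H: "\<forall>i<2 * L. H (b + i) = (\<exists>w\<in>A. manchester (c w) i)"
    and valid: "manchester_valid L H b"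
  shows "\<exists>w\<in>A. manchester_decode L H b = c w"
proof -
  have pair: "H (b + 2 * k) = (\<exists>w\<in>A. c w ! k) \<and> H (b + 2 * k + 1) = (\<exists>w\<in>A. \<not> c w ! k)
      \<and> H (b + 2 * k) \<noteq> H (b + 2 * k + 1)" if "k < L" for k
    using H[rule_format, of "2 * k"] H[rule_format, of "2 * k + 1"] valid that
    by (simp add: add.assoc manchester_valid_def)
  have "(\<exists>w\<in>A. c w ! 0) \<or> (\<exists>w\<in>A. \<not> c w ! 0)" using pair[of 0] \<open>L \<ge> 1\<close> by auto
  then obtain w where w: "w \<in> A" by blast
  have "H (b + 2 * k) = c w ! k" if "k < L" for k
    using pair[OF that] w by (cases "c w ! k") auto
  then have "manchester_decode L H b = c w"
    using len w by (auto simp: manchester_decode_def intro: nth_equalityI)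
  then show ?thesis using w by blast
qed

section \<open>Executions, hop balls and known messages\<close>

lemma length_exec: "length (exec A E r v) = r"
  by (induction r arbitrary: v) auto

lemma exec_nth: "k < r \<Longrightarrow> exec A E r v ! k = exec A E (Suc k) v ! k"
  by (induction r) (auto simp: nth_append length_exec less_Suc_eq)

lemma exec_Suc_last:
  "exec A E (Suc r) v ! r = (\<not> A v (exec A E r v) \<and> (\<exists>w. E v w \<and> A w (exec A E r w)))"
  by (simp add: nth_append length_exec)

lemma undirected_graph_edgeD:
  "undirected_graph V E \<Longrightarrow> E x y \<Longrightarrow> x \<in> V \<and> y \<in> V \<and> x \<noteq> y \<and> E y x"
  unfolding undirected_graph_def by blast

lemma finite_neighbours: "undirected_graph V E \<Longrightarrow> finite {u. E w u}"
  unfolding undirected_graph_def by (rule finite_subset[of _ V]) auto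

lemma card_other_neighbours_le:
  assumes "undirected_graph V E" "E v u"
  shows "card (insert v ({w. E v w} - {u})) \<le> degree E v"
proof -
  have fin: "finite {w. E v w}" using finite_neighbours[OF assms(1)] .
  have "card (insert v ({w. E v w} - {u})) \<le> Suc (card ({w. E v w} - {u}))"
    by (simp add: card_insert_if fin)
  also have "\<dots> = card {w. E v w}"
  proof -
    have "card {w. E v w} > 0" using fin \<open>E v u\<close> by (auto simp: card_gt_0_iff)
    then show ?thesis using fin \<open>E v u\<close> by simp
  qed
  finally show ?thesis by (simp add: degree_def)
qed

fun hop_ball :: "(nat \<Rightarrow> nat \<Rightarrow> bool) \<Rightarrow> nat \<Rightarrow> nat \<Rightarrow> nat set" where
  "hop_ball E w 0 = {w}"
| "hop_ball E w (Suc t) = insert w (\<Union>u\<in>{u. E w u}. hop_ball E u t)"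

lemma center_in_hop_ball: "w \<in> hop_ball E w t"
  by (cases t) auto

lemma hop_ball_mono_Suc: "hop_ball E w t \<subseteq> hop_ball E w (Suc t)"
  by (induction t arbitrary: w) fastforce+

lemma hop_ball_mono: "t \<le> t' \<Longrightarrow> hop_ball E w t \<subseteq> hop_ball E w t'"
  by (induction t' rule: dec_induct) (use hop_ball_mono_Suc in blast)+

lemma hop_ball_subset:
  "undirected_graph V E \<Longrightarrow> w \<in> V \<Longrightarrow> hop_ball E w t \<subseteq> V"
  by (induction t arbitrary: w) (auto dest: undirected_graph_edgeD)

lemma finite_hop_ball: "undirected_graph V E \<Longrightarrow> w \<in> V \<Longrightarrow> finite (hop_ball E w t)"
  using hop_ball_subset[of V E w t] unfolding undirected_graph_def by (blast intro: finite_subset)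

lemma relpow_imp_in_hop_ball:
  assumes "undirected_graph V E" "(x, y) \<in> {(a, b). E a b} ^^ k"
  shows "x \<in> hop_ball E y k"
  using assms(2)
proof (induction k arbitrary: y)
  case (Suc k)
  then obtain z where "(x, z) \<in> {(a, b). E a b} ^^ k" "E z y" by (auto elim: relpow_Suc_E)
  then show ?case using Suc.IH undirected_graph_edgeD[OF assms(1)] by fastforce
qed simp

lemma within_hops_imp_in_hop_ball:
  assumes "undirected_graph V E" "within_hops E h u v"
  shows "u \<in> hop_ball E v h"
  using assms relpow_imp_in_hop_ball hop_ball_mono unfolding within_hops_def by blast

lemma hop_ball_degree_le_one:
  assumes G: "undirected_graph V E" and deg: "\<forall>v\<in>V. degree E v \<le> 1" and "w \<in> V"
  shows "hop_ball E w t \<subseteq> insert w {u. E w u}"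
  using \<open>w \<in> V\<close>
proof (induction t arbitrary: w)
  case (Suc t)
  have "hop_ball E u t \<subseteq> insert w {u. E w u}" if u: "E w u" for u
  proof -
    have "u \<in> V" "E u w" using undirected_graph_edgeD[OF G u] by auto
    then have "{x. E u x} = {w}"
      using deg card_le_Suc0_iff_eq[OF finite_neighbours[OF G, of u]]
      by (auto simp: degree_def)
    then show ?thesis using Suc.IH[OF \<open>u \<in> V\<close>] u by blast
  qed
  then show ?case by auto
qed simp

text \<open>For \<open>\<Delta> \<ge> 2\<close> the ball has at most \<open>1 + \<Delta> + \<dots> + \<Delta> ^ t < 2 * \<Delta> ^ t\<close> nodes; for \<open>\<Delta> = 1\<close>
  it is a single edge.\<close>

lemma card_hop_ball_le:
  assumes G: "undirected_graph V E" and deg: "\<forall>v\<in>V. degree E v \<le> \<Delta>" and "\<Delta> \<ge> 1" "w \<in> V"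
  shows "card (hop_ball E w t) \<le> 2 * \<Delta> ^ t"
proof (cases "\<Delta> = 1")
  case True
  have "card (hop_ball E w t) \<le> card (insert w {u. E w u})"
    using hop_ball_degree_le_one[OF G _ \<open>w \<in> V\<close>] deg True finite_neighbours[OF G]
    by (intro card_mono) auto
  also have "\<dots> \<le> Suc (card {u. E w u})" by (simp add: card_insert_if finite_neighbours[OF G])
  also have "card {u. E w u} \<le> 1" using deg \<open>w \<in> V\<close> True by (simp add: degree_def)
  finally show ?thesis using True by simp
next
  case False
  have "card (hop_ball E w t) + 1 \<le> 2 * \<Delta> ^ t" using \<open>w \<in> V\<close>
  proof (induction t arbitrary: w)
    case (Suc t)
    let ?N = "{u. E w u}"
    have fN: "finite ?N" by (rule finite_neighbours[OF G])
    have "card (hop_ball E w (Suc t)) \<le> card (\<Union>u\<in>?N. hop_ball E u t) + 1"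
      unfolding hop_ball.simps by (rule card_insert_le_m1) auto
    also have "card (\<Union>u\<in>?N. hop_ball E u t) \<le> (\<Sum>u\<in>?N. card (hop_ball E u t))"
      using fN by (rule card_UN_le)
    also have "\<dots> \<le> (\<Sum>u\<in>?N. 2 * \<Delta> ^ t - 1)"
      using Suc.IH undirected_graph_edgeD[OF G] by (intro sum_mono) fastforce
    also have "\<dots> \<le> \<Delta> * (2 * \<Delta> ^ t - 1)"
      using deg Suc.prems by (simp add: degree_def)
    finally have "card (hop_ball E w (Suc t)) + 1 \<le> \<Delta> * (2 * \<Delta> ^ t - 1) + 2" by simp
    also have "\<dots> \<le> 2 * \<Delta> ^ Suc t"
    proof -
      have "\<Delta> ^ t \<noteq> 0" using \<open>\<Delta> \<ge> 1\<close> by simp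
      then obtain z where "\<Delta> ^ t = Suc z" using not0_implies_Suc by blast
      then show ?thesis using False \<open>\<Delta> \<ge> 1\<close> by (simp add: algebra_simps)
    qed
    finally show ?case .
  qed simp
  then show ?thesis by simp
qed

text \<open>What node \<open>w\<close> knows after \<open>i\<close> relay phases: the messages whose source lies within
  \<open>i\<close> hops and whose destination lies within \<open>h - i\<close> hops of \<open>w\<close>.\<close>

definition known_messages ::
    "(nat \<Rightarrow> nat \<Rightarrow> bool) \<Rightarrow> (nat \<Rightarrow> nat \<Rightarrow> bool list option) \<Rightarrow> nat \<Rightarrow> nat \<Rightarrow> nat \<Rightarrow> message set" where
  "known_messages E m h w i =
     {(s, d, x). s \<in> hop_ball E w i \<and> d \<in> hop_ball E w (h - i) \<and> m s d = Some x}"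

lemma known_messages_Suc:
  assumes G: "undirected_graph V E" and "i < h"
  shows "known_messages E m h v (Suc i) =
    {t \<in> known_messages E m h v i \<union> (\<Union>u\<in>{u. E v u}. known_messages E m h u i).
       fst (snd t) \<in> hop_ball E v (h - Suc i)}" (is "_ = ?R")
proof -
  have hi: "h - i = Suc (h - Suc i)" using \<open>i < h\<close> by simp
  have nbr: "hop_ball E v (h - Suc i) \<subseteq> hop_ball E u (h - i)" if "E v u" for u
    using undirected_graph_edgeD[OF G that] by (auto simp: hi)
  have own: "hop_ball E v (h - Suc i) \<subseteq> hop_ball E v (h - i)"
    using hop_ball_mono_Suc by (simp add: hi)
  show ?thesis
  proof (intro set_eqI iffI)
    fix t assume t: "t \<in> known_messages E m h v (Suc i)"
    obtain s d x where [simp]: "t = (s, d, x)" by (cases t)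
    from t have "s = v \<or> (\<exists>u. E v u \<and> s \<in> hop_ball E u i)"
      and "d \<in> hop_ball E v (h - Suc i)" "m s d = Some x"
      by (auto simp: known_messages_def)
    then show "t \<in> ?R"
      using nbr own center_in_hop_ball[of v E i] unfolding known_messages_def by auto
  next
    fix t assume t: "t \<in> ?R"
    obtain s d x where [simp]: "t = (s, d, x)" by (cases t)
    have "hop_ball E v i \<subseteq> hop_ball E v (Suc i)" by (rule hop_ball_mono_Suc)
    moreover have "hop_ball E u i \<subseteq> hop_ball E v (Suc i)" if "E v u" for u using that by auto
    ultimately show "t \<in> known_messages E m h v (Suc i)"
      using t unfolding known_messages_def by auto
  qed
qed
section \<open>The simulation algorithm\<close>

definition id_bound :: "params \<Rightarrow> nat" where
  "id_bound p = nat \<lfloor>real (fst p) powr fst (snd p)\<rfloor>"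

definition max_deg_of :: "params \<Rightarrow> nat" where
  "max_deg_of p = fst (snd (snd p))"

definition hops_of :: "params \<Rightarrow> nat" where
  "hops_of p = fst (snd (snd (snd p)))"

definition bits_of :: "params \<Rightarrow> nat" where
  "bits_of p = snd (snd (snd (snd p)))"

definition id_bits :: "params \<Rightarrow> nat" where
  "id_bits p = nat \<lceil>log 2 (real (id_bound p) + 2)\<rceil>"

definition num_colourings :: "params \<Rightarrow> nat" where
  "num_colourings p = (max_deg_of p + 1) * id_bits p"

definition num_colours :: "params \<Rightarrow> nat" where
  "num_colours p = 2 * max_deg_of p"

definition num_slots :: "params \<Rightarrow> nat" where
  "num_slots p = num_colourings p * num_colours p"

definition capacity :: "params \<Rightarrow> nat" where
  "capacity p = 4 * max_deg_of p ^ hops_of p"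

definition code_length :: "params \<Rightarrow> nat" where
  "code_length p = capacity p * (2 * id_bits p + bits_of p + 1)"

definition slot_length :: "params \<Rightarrow> nat" where
  "slot_length p = 2 * code_length p"

definition phase_length :: "params \<Rightarrow> nat" where
  "phase_length p = num_slots p * slot_length p"

definition slot_start :: "params \<Rightarrow> nat \<Rightarrow> nat \<Rightarrow> nat" where
  "slot_start p j s = j * phase_length p + s * slot_length p"

definition colouring :: "params \<Rightarrow> nat \<Rightarrow> nat \<Rightarrow> nat" where
  "colouring p = (SOME F. separating_colourings {1..id_bound p} (max_deg_of p)
                            (num_colourings p) (num_colours p) F)"

definition selected :: "params \<Rightarrow> nat \<Rightarrow> nat \<Rightarrow> bool" where
  "selected p s u \<longleftrightarrow> colouring p (s div num_colours p) u = s mod num_colours p"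

definition encode :: "params \<Rightarrow> message set \<Rightarrow> bool list" where
  "encode p = bit_code (message_sets (id_bound p) (bits_of p) (capacity p)) (code_length p)"

definition decode :: "params \<Rightarrow> bool list \<Rightarrow> message set" where
  "decode p = bit_decode (message_sets (id_bound p) (bits_of p) (capacity p)) (code_length p)"

definition received :: "params \<Rightarrow> nat \<Rightarrow> (nat \<Rightarrow> bool) \<Rightarrow> nat \<Rightarrow> message set set" where
  "received p v H j =
     (\<lambda>s. decode p (manchester_decode (code_length p) H (slot_start p j s))) `
       {s. s < num_slots p \<and> \<not> selected p s v \<and>
           manchester_valid (code_length p) H (slot_start p j s)}"

fun local_ball :: "params \<Rightarrow> nat \<Rightarrow> (nat \<Rightarrow> bool) \<Rightarrow> nat \<Rightarrow> nat set" where
  "local_ball p v H 0 = {v}"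
| "local_ball p v H (Suc t) = insert v (\<Union>P\<in>received p v H t. fst ` P)"

fun local_known ::
    "params \<Rightarrow> nat \<Rightarrow> (nat \<Rightarrow> bool list option) \<Rightarrow> (nat \<Rightarrow> bool) \<Rightarrow> nat \<Rightarrow> message set" where
  "local_known p v mv H 0 = {(s, d, x). s = v \<and> d \<in> local_ball p v H (hops_of p) \<and> mv d = Some x}"
| "local_known p v mv H (Suc i) =
     {t \<in> local_known p v mv H i \<union> \<Union>(received p v H (hops_of p + i)).
        fst (snd t) \<in> local_ball p v H (hops_of p - Suc i)}"

text \<open>In the first \<open>h\<close> phases a node \<open>x\<close> travels as the dummy message \<open>(x, 0, [])\<close>.\<close>

definition payload ::
    "params \<Rightarrow> nat \<Rightarrow> (nat \<Rightarrow> bool list option) \<Rightarrow> (nat \<Rightarrow> bool) \<Rightarrow> nat \<Rightarrow> message set" where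
  "payload p v mv H j =
     (if j < hops_of p then (\<lambda>x. (x, 0, [])) ` local_ball p v H j
      else local_known p v mv H (j - hops_of p))"

definition sim_beep :: beep_rule where
  "sim_beep p v mv hist =
     (let r = length hist; j = r div phase_length p;
          s = (r mod phase_length p) div slot_length p; i = (r mod phase_length p) mod slot_length p
      in j < 2 * hops_of p \<and> selected p s v \<and>
         manchester (encode p (payload p v mv (\<lambda>k. hist ! k) j)) i)"

definition sim_output :: output_rule where
  "sim_output p v mv hist u =
     (let K = local_known p v mv (\<lambda>k. hist ! k) (hops_of p)
      in if \<exists>x. (u, v, x) \<in> K then Some (SOME x. (u, v, x) \<in> K) else None)"

text \<open>For \<open>n = 0\<close> the claimed bound is \<open>0\<close>, and there is nothing to deliver.\<close>

definition sim_rounds :: "params \<Rightarrow> nat" where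
  "sim_rounds p = (if fst p = 0 then 0 else 2 * hops_of p * phase_length p)"

lemma slot_offset_less:
  assumes "s < num_slots p" "i < slot_length p"
  shows "s * slot_length p + i < phase_length p"
proof -
  have "s * slot_length p + i < Suc s * slot_length p" using assms(2) by simp
  also have "\<dots> \<le> phase_length p"
    unfolding phase_length_def by (rule mult_le_mono1) (use assms(1) in simp)
  finally show ?thesis .
qed

lemma slot_round_decomp:
  assumes "s < num_slots p" "i < slot_length p"
  shows "(slot_start p j s + i) div phase_length p = j"
    and "(slot_start p j s + i) mod phase_length p div slot_length p = s"
    and "(slot_start p j s + i) mod phase_length p mod slot_length p = i"
proof -
  have lt: "s * slot_length p + i < phase_length p" using assms by (rule slot_offset_less)
  have eq: "slot_start p j s + i = (s * slot_length p + i) + phase_length p * j"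
    by (simp add: slot_start_def)
  show "(slot_start p j s + i) div phase_length p = j"
    unfolding eq using lt by simp
  have "(slot_start p j s + i) mod phase_length p = s * slot_length p + i"
    unfolding eq using lt by simp
  then show "(slot_start p j s + i) mod phase_length p div slot_length p = s"
    and "(slot_start p j s + i) mod phase_length p mod slot_length p = i"
    using assms(2) by simp_all
qed

lemma slot_start_less:
  assumes "s < num_slots p" "i < slot_length p"
  shows "slot_start p j s + i < Suc j * phase_length p"
  using slot_offset_less[OF assms] by (simp add: slot_start_def)

lemma received_cong:
  assumes "\<forall>k < Suc j * phase_length p. H k = H' k"
  shows "received p v H j = received p v H' j"
proof -
  have slot: "H (slot_start p j s + i) = H' (slot_start p j s + i)"
    if "s < num_slots p" "i < slot_length p" for s i
    using assms slot_start_less[OF that] by blast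
  have "manchester_valid (code_length p) H (slot_start p j s) =
        manchester_valid (code_length p) H' (slot_start p j s)
      \<and> manchester_decode (code_length p) H (slot_start p j s) =
        manchester_decode (code_length p) H' (slot_start p j s)" if "s < num_slots p" for s
    using slot[OF that, of "2 * _"] slot[OF that, of "2 * _ + 1"]
    by (simp add: manchester_valid_def manchester_decode_def slot_length_def add.assoc)
  then show ?thesis unfolding received_def by (auto intro!: image_cong)
qed

lemma local_ball_cong:
  "\<forall>k < t * phase_length p. H k = H' k \<Longrightarrow> local_ball p v H t = local_ball p v H' t"
proof (induction t)
  case (Suc t)
  then have "received p v H t = received p v H' t" by (intro received_cong) simp
  moreover have "\<forall>k < t * phase_length p. H k = H' k" using Suc.prems by simp
  ultimately show ?case using Suc.IH by simp
qed simp

lemma local_known_cong: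
  "\<forall>k < (hops_of p + i) * phase_length p. H k = H' k \<Longrightarrow>
     local_known p v mv H i = local_known p v mv H' i"
proof (induction i)
  case 0
  then show ?case using local_ball_cong[of "hops_of p" p H H' v] by simp
next
  case (Suc i)
  have le: "(hops_of p + i) * phase_length p \<le> (hops_of p + Suc i) * phase_length p"
    "(hops_of p - Suc i) * phase_length p \<le> (hops_of p + Suc i) * phase_length p"
    by (rule mult_le_mono1, simp)+
  have "received p v H (hops_of p + i) = received p v H' (hops_of p + i)"
    using Suc.prems by (intro received_cong) simp
  moreover have "local_ball p v H (hops_of p - Suc i) = local_ball p v H' (hops_of p - Suc i)"
    using Suc.prems le(2) by (intro local_ball_cong) simp
  moreover have "local_known p v mv H i = local_known p v mv H' i"
    using Suc.prems le(1) by (intro Suc.IH) simp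
  ultimately show ?case by simp
qed

lemma payload_cong:
  assumes "\<forall>k < j * phase_length p. H k = H' k"
  shows "payload p v mv H j = payload p v mv H' j"
proof (cases "j < hops_of p")
  case True
  then show ?thesis using local_ball_cong[OF assms] by (simp add: payload_def)
next
  case False
  then have "hops_of p + (j - hops_of p) = j" by simp
  then show ?thesis
    using local_known_cong[of p "j - hops_of p" H H' v mv] assms False by (simp add: payload_def)
qed

lemma le_two_power_ceiling_log:
  fixes x :: real
  assumes "x \<ge> 1"
  shows "x \<le> 2 ^ nat \<lceil>log 2 x\<rceil>"
proof -
  have "x = 2 powr (log 2 x)" using assms by simp
  also have "\<dots> \<le> 2 powr (real (nat \<lceil>log 2 x\<rceil>))"
    using assms by (intro powr_mono) linarith+
  also have "\<dots> = 2 ^ nat \<lceil>log 2 x\<rceil>" by (simp add: powr_realpow)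
  finally show ?thesis .
qed

lemma id_bits_pos: "id_bits p \<ge> 1"
proof -
  have "1 \<le> \<lceil>log 2 (real (id_bound p) + 2)\<rceil>" by simp
  then show ?thesis unfolding id_bits_def by linarith
qed

section \<open>Correctness\<close>

locale simulation_instance =
  fixes n :: nat and c :: real and \<Delta> h B :: nat and V :: "nat set"
    and E :: "nat \<Rightarrow> nat \<Rightarrow> bool" and m :: "nat \<Rightarrow> nat \<Rightarrow> bool list option"
  assumes G: "undirected_graph V E"
    and ids: "V \<subseteq> {1..nat \<lfloor>real n powr c\<rfloor>}"
    and max_deg: "max_degree_is V E \<Delta>"
    and msg_len: "\<forall>u v x. m u v = Some x \<longrightarrow> length x \<le> B"
    and nonempty: "V \<noteq> {}" and deg_pos: "\<Delta> \<ge> 1" and hops_pos: "h \<ge> 1"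
begin

abbreviation p :: params where "p \<equiv> (n, c, \<Delta>, h, B)"

abbreviation N :: nat where "N \<equiv> nat \<lfloor>real n powr c\<rfloor>"

lemma param_simps [simp]:
  "id_bound p = N" "max_deg_of p = \<Delta>" "hops_of p = h" "bits_of p = B"
  by (simp_all add: id_bound_def max_deg_of_def hops_of_def bits_of_def)

lemma degree_le: "v \<in> V \<Longrightarrow> degree E v \<le> \<Delta>"
  using max_deg by (simp add: max_degree_is_def)

lemma N_pos: "N \<ge> 1"
  using nonempty ids by fastforce

lemma id_bits_ok: "N + 2 \<le> 2 ^ id_bits p"
proof -
  have "real N + 2 \<le> 2 ^ id_bits p"
    unfolding id_bits_def param_simps by (rule le_two_power_ceiling_log) simp
  then show ?thesis by (metis of_nat_add of_nat_le_iff of_nat_numeral of_nat_power)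
qed

lemma colouring_separates:
  "separating_colourings {1..N} \<Delta> (num_colourings p) (num_colours p) (colouring p)"
proof -
  have "\<exists>F. separating_colourings {1..N} \<Delta> (num_colourings p) (num_colours p) F"
    using separating_colourings_exist[of "{1..N}" \<Delta> "id_bits p"] id_bits_ok deg_pos
    by (simp add: num_colourings_def num_colours_def)
  then show ?thesis unfolding colouring_def param_simps by (rule someI_ex)
qed

lemma card_message_sets_le_code: "card (message_sets N B (capacity p)) \<le> 2 ^ code_length p"
  using card_message_sets_le[OF id_bits_ok, of B "capacity p"] by (simp add: code_length_def)

abbreviation run :: "nat \<Rightarrow> nat \<Rightarrow> bool list" where
  "run \<equiv> exec (\<lambda>v. sim_beep p v (m v)) E"

definition heard :: "nat \<Rightarrow> nat \<Rightarrow> bool" where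
  "heard v k = run (Suc k) v ! k"

lemma run_nth: "k < r \<Longrightarrow> run r v ! k = heard v k"
  by (simp add: heard_def exec_nth)

definition ideal_payload :: "nat \<Rightarrow> nat \<Rightarrow> message set" where
  "ideal_payload j w =
     (if j < h then (\<lambda>x. (x, 0, [])) ` hop_ball E w j else known_messages E m h w (j - h))"

lemma ideal_payload_in_message_sets:
  assumes "w \<in> V" "j < 2 * h"
  shows "ideal_payload j w \<in> message_sets N B (capacity p)"
proof -
  have "V \<subseteq> {..N}" using ids by auto
  then have ball: "hop_ball E w t \<subseteq> {..N}" for t using hop_ball_subset[OF G \<open>w \<in> V\<close>] by blast
  have card_ball: "card (hop_ball E w t) \<le> 2 * \<Delta> ^ t" for t
    using card_hop_ball_le[OF G _ deg_pos \<open>w \<in> V\<close>] degree_le by blast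
  show ?thesis
  proof (cases "j < h")
    case True
    have "card (ideal_payload j w) \<le> card (hop_ball E w j)"
      using True by (simp add: ideal_payload_def card_image_le finite_hop_ball[OF G \<open>w \<in> V\<close>])
    also have "\<dots> \<le> 2 * \<Delta> ^ h"
      using card_ball[of j] power_increasing[of j h \<Delta>] True deg_pos by simp
    finally show ?thesis
      using True ball[of j] by (auto simp: ideal_payload_def message_sets_def messages_def capacity_def)
  next
    case False
    let ?i = "j - h"
    have "card (known_messages E m h w ?i) \<le> card (hop_ball E w ?i \<times> hop_ball E w (h - ?i))"
      using finite_hop_ball[OF G \<open>w \<in> V\<close>]
      by (intro card_inj_on_le[of "\<lambda>(s, d, x). (s, d)"]) (auto simp: known_messages_def inj_on_def)
    also have "\<dots> \<le> (2 * \<Delta> ^ ?i) * (2 * \<Delta> ^ (h - ?i))"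
      unfolding card_cartesian_product by (intro mult_mono card_ball) auto
    also have "\<dots> = 4 * \<Delta> ^ h" using False \<open>j < 2 * h\<close> by (simp flip: power_add)
    finally show ?thesis
      using False ball msg_len
      by (auto simp: ideal_payload_def message_sets_def messages_def capacity_def known_messages_def)
  qed
qed

lemma code_of_ideal_payload:
  assumes "w \<in> V" "j < 2 * h"
  shows "length (encode p (ideal_payload j w)) = code_length p"
    and "decode p (encode p (ideal_payload j w)) = ideal_payload j w"
  using length_bit_code[OF finite_message_sets card_message_sets_le_code]
    bit_decode_code[OF finite_message_sets card_message_sets_le_code]
    ideal_payload_in_message_sets[OF assms]
  by (simp_all add: encode_def decode_def)

lemma sim_beep_in_slot:
  assumes "s < num_slots p" "i < slot_length p" "j < 2 * h"
  shows "sim_beep p v (m v) (run (slot_start p j s + i) v) \<longleftrightarrow>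
           selected p s v \<and> manchester (encode p (payload p v (m v) (heard v) j)) i"
proof -
  have "\<forall>k < j * phase_length p. run (slot_start p j s + i) v ! k = heard v k"
    by (auto simp: slot_start_def intro!: run_nth)
  then have "payload p v (m v) (\<lambda>k. run (slot_start p j s + i) v ! k) j = payload p v (m v) (heard v) j"
    by (rule payload_cong)
  then show ?thesis
    using slot_round_decomp[OF assms(1,2), of j] assms(3) by (simp add: sim_beep_def length_exec)
qed

lemma code_length_pos: "code_length p \<ge> 1"
  using one_le_power[OF deg_pos, of h] by (simp add: code_length_def capacity_def)

lemma heard_in_slot:
  assumes ideal: "\<forall>w\<in>V. payload p w (m w) (heard w) j = ideal_payload j w"
    and "v \<in> V" "s < num_slots p" "i < slot_length p" "j < 2 * h"
  shows "heard v (slot_start p j s + i) \<longleftrightarrow>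
    \<not> (selected p s v \<and> manchester (encode p (ideal_payload j v)) i) \<and>
    (\<exists>w. E v w \<and> selected p s w \<and> manchester (encode p (ideal_payload j w)) i)"
proof -
  have beep: "sim_beep p w (m w) (run (slot_start p j s + i) w) \<longleftrightarrow>
      selected p s w \<and> manchester (encode p (ideal_payload j w)) i" if "w \<in> V" for w
    using sim_beep_in_slot[OF assms(3-5), of w] ideal that by simp
  then have "(\<exists>w. E v w \<and> sim_beep p w (m w) (run (slot_start p j s + i) w)) \<longleftrightarrow>
      (\<exists>w. E v w \<and> selected p s w \<and> manchester (encode p (ideal_payload j w)) i)"
    using undirected_graph_edgeD[OF G] by blast
  then show ?thesis using beep[OF \<open>v \<in> V\<close>] unfolding heard_def exec_Suc_last by simp
qed

lemma isolating_slot: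
  assumes "v \<in> V" "E v u"
  shows "\<exists>s < num_slots p. selected p s u \<and> \<not> selected p s v \<and>
           (\<forall>w. E v w \<and> w \<noteq> u \<longrightarrow> \<not> selected p s w)"
proof -
  let ?S = "insert v ({w. E v w} - {u})"
  have "u \<in> V" "u \<noteq> v" using undirected_graph_edgeD[OF G \<open>E v u\<close>] by auto
  have "card ?S \<le> \<Delta>" using card_other_neighbours_le[OF G \<open>E v u\<close>] degree_le[OF \<open>v \<in> V\<close>] by simp
  moreover have "?S \<subseteq> {1..N}" "u \<in> {1..N}"
    using ids \<open>v \<in> V\<close> \<open>u \<in> V\<close> undirected_graph_edgeD[OF G] by blast+
  moreover have "u \<notin> ?S" using \<open>u \<noteq> v\<close> by simp
  ultimately obtain j where j: "j < num_colourings p" "colouring p j u \<notin> colouring p j ` ?S"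
    using colouring_separates unfolding separating_colourings_def by blast
  let ?Q = "num_colours p"
  have q: "colouring p j u < ?Q"
    using colouring_separates j(1) \<open>u \<in> {1..N}\<close> unfolding separating_colourings_def by blast
  define s where "s = j * ?Q + colouring p j u"
  have sel: "selected p s w \<longleftrightarrow> colouring p j w = colouring p j u" for w
    using q by (simp add: selected_def s_def)
  have "s < num_slots p"
  proof -
    have "s < Suc j * ?Q" using q by (simp add: s_def)
    also have "\<dots> \<le> num_slots p" unfolding num_slots_def by (rule mult_le_mono1) (use j(1) in simp)
    finally show ?thesis .
  qed
  moreover have "\<not> selected p s w" if "w \<in> ?S" for w
  proof
    assume "selected p s w"
    then have "colouring p j u = colouring p j w" by (simp add: sel)
    then have "colouring p j u \<in> colouring p j ` ?S" using that by (rule image_eqI)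
    with j(2) show False ..
  qed
  ultimately show ?thesis by (intro exI[of _ s]) (auto simp: sel)
qed

lemma heard_slot_manchester:
  assumes ideal: "\<forall>w\<in>V. payload p w (m w) (heard w) j = ideal_payload j w"
    and "v \<in> V" "s < num_slots p" "\<not> selected p s v" "j < 2 * h"
  shows "\<forall>i<2 * code_length p. heard v (slot_start p j s + i) =
           (\<exists>w\<in>{w. E v w \<and> selected p s w}. manchester (encode p (ideal_payload j w)) i)"
  using heard_in_slot[OF ideal assms(2,3) _ assms(5)] assms(4) by (auto simp: slot_length_def)

lemma received_subset_ideal:
  assumes ideal: "\<forall>w\<in>V. payload p w (m w) (heard w) j = ideal_payload j w"
    and "j < 2 * h" "v \<in> V"
  shows "received p v (heard v) j \<subseteq> ideal_payload j ` {u. E v u}"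
proof
  fix P assume "P \<in> received p v (heard v) j"
  then obtain s where s: "s < num_slots p" "\<not> selected p s v"
      "manchester_valid (code_length p) (heard v) (slot_start p j s)"
    and P: "P = decode p (manchester_decode (code_length p) (heard v) (slot_start p j s))"
    unfolding received_def by blast
  have "\<exists>w\<in>{w. E v w \<and> selected p s w}.
      manchester_decode (code_length p) (heard v) (slot_start p j s) = encode p (ideal_payload j w)"
  proof (rule manchester_decode_superposition)
    show "\<forall>w\<in>{w. E v w \<and> selected p s w}. length (encode p (ideal_payload j w)) = code_length p"
      using code_of_ideal_payload(1)[OF _ \<open>j < 2 * h\<close>] undirected_graph_edgeD[OF G] by blast
  qed (use heard_slot_manchester[OF ideal \<open>v \<in> V\<close> s(1,2) \<open>j < 2 * h\<close>] s(3) code_length_pos in auto)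
  then show "P \<in> ideal_payload j ` {u. E v u}"
    using P code_of_ideal_payload(2)[OF _ \<open>j < 2 * h\<close>] undirected_graph_edgeD[OF G] by auto
qed

lemma ideal_in_received:
  assumes ideal: "\<forall>w\<in>V. payload p w (m w) (heard w) j = ideal_payload j w"
    and "j < 2 * h" "v \<in> V" "E v u"
  shows "ideal_payload j u \<in> received p v (heard v) j"
proof -
  have "u \<in> V" using undirected_graph_edgeD[OF G \<open>E v u\<close>] by blast
  obtain s where s: "s < num_slots p" "selected p s u" "\<not> selected p s v"
    and others: "\<forall>w. E v w \<and> w \<noteq> u \<longrightarrow> \<not> selected p s w"
    using isolating_slot[OF \<open>v \<in> V\<close> \<open>E v u\<close>] by blast
  have "\<forall>i<2 * code_length p. heard v (slot_start p j s + i) = manchester (encode p (ideal_payload j u)) i"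
    using heard_slot_manchester[OF ideal \<open>v \<in> V\<close> s(1,3) \<open>j < 2 * h\<close>] s(2) others \<open>E v u\<close> by blast
  then have "manchester_valid (code_length p) (heard v) (slot_start p j s) \<and>
      manchester_decode (code_length p) (heard v) (slot_start p j s) = encode p (ideal_payload j u)"
    by (rule manchester_decode_single[OF code_of_ideal_payload(1)[OF \<open>u \<in> V\<close> \<open>j < 2 * h\<close>]])
  then have "ideal_payload j u = decode p (manchester_decode (code_length p) (heard v) (slot_start p j s))"
    and "manchester_valid (code_length p) (heard v) (slot_start p j s)"
    using code_of_ideal_payload(2)[OF \<open>u \<in> V\<close> \<open>j < 2 * h\<close>] by simp_all
  then show ?thesis unfolding received_def using s(1,3) by blast
qed

lemma received_eq_ideal:
  assumes "\<forall>w\<in>V. payload p w (m w) (heard w) j = ideal_payload j w" "j < 2 * h" "v \<in> V"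
  shows "received p v (heard v) j = ideal_payload j ` {u. E v u}"
  using received_subset_ideal[OF assms] ideal_in_received[OF assms] by blast

definition local_views_correct :: "nat \<Rightarrow> bool" where
  "local_views_correct j \<longleftrightarrow> (\<forall>v\<in>V.
     (\<forall>t. t \<le> j \<and> t \<le> h \<longrightarrow> local_ball p v (heard v) t = hop_ball E v t) \<and>
     (\<forall>i. h + i \<le> j \<longrightarrow> local_known p v (m v) (heard v) i = known_messages E m h v i))"

lemma payload_eq_ideal:
  assumes "local_views_correct j" "v \<in> V"
  shows "payload p v (m v) (heard v) j = ideal_payload j v"
  using assms by (cases "j < h") (simp_all add: local_views_correct_def payload_def ideal_payload_def)

lemma local_ball_step:
  assumes "local_views_correct j" "j < h" "v \<in> V"
  shows "local_ball p v (heard v) (Suc j) = hop_ball E v (Suc j)"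
proof -
  have "received p v (heard v) j = ideal_payload j ` {u. E v u}"
    using assms payload_eq_ideal by (intro received_eq_ideal) auto
  then show ?thesis using \<open>j < h\<close> by (simp add: ideal_payload_def image_image)
qed

lemma local_known_step:
  assumes "local_views_correct (h + i)" "i < h" "v \<in> V"
  shows "local_known p v (m v) (heard v) (Suc i) = known_messages E m h v (Suc i)"
proof -
  have "received p v (heard v) (h + i) = ideal_payload (h + i) ` {u. E v u}"
    using assms payload_eq_ideal by (intro received_eq_ideal) auto
  moreover have "local_known p v (m v) (heard v) i = known_messages E m h v i"
    and "local_ball p v (heard v) (h - Suc i) = hop_ball E v (h - Suc i)"
    using assms(1,3) by (simp_all add: local_views_correct_def)
  ultimately show ?thesis
    using known_messages_Suc[OF G assms(2)] by (simp add: ideal_payload_def)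
qed

lemma local_views_correct_Suc:
  assumes "local_views_correct j" "j < 2 * h"
  shows "local_views_correct (Suc j)"
  unfolding local_views_correct_def
proof (intro ballI conjI allI impI)
  fix v assume "v \<in> V"
  have old_ball: "local_ball p v (heard v) t = hop_ball E v t" if "t \<le> j" "t \<le> h" for t
    using assms(1) \<open>v \<in> V\<close> that by (simp add: local_views_correct_def)
  have old_known: "local_known p v (m v) (heard v) i = known_messages E m h v i" if "h + i \<le> j" for i
    using assms(1) \<open>v \<in> V\<close> that by (simp add: local_views_correct_def)
  show new_ball: "local_ball p v (heard v) t = hop_ball E v t" if "t \<le> Suc j \<and> t \<le> h" for t
  proof (cases "t \<le> j")
    case False
    then have "t = Suc j" "j < h" using that by auto
    then show ?thesis using local_ball_step[OF assms(1) _ \<open>v \<in> V\<close>] by simp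
  qed (use old_ball that in simp)
  fix i assume "h + i \<le> Suc j"
  show "local_known p v (m v) (heard v) i = known_messages E m h v i"
  proof (cases "h + i \<le> j")
    case False
    then have j: "h + i = Suc j" using \<open>h + i \<le> Suc j\<close> by simp
    show ?thesis
    proof (cases i)
      case 0
      have "local_ball p v (heard v) h = hop_ball E v h" by (rule new_ball) (use j 0 in simp)
      then show ?thesis using 0 by (auto simp: known_messages_def)
    next
      case (Suc i')
      then show ?thesis using local_known_step[of i' v] assms j \<open>v \<in> V\<close> by simp
    qed
  qed (use old_known in simp)
qed

lemma all_local_views_correct: "j \<le> 2 * h \<Longrightarrow> local_views_correct j"
proof (induction j)
  case 0
  then show ?case using hops_pos by (auto simp: local_views_correct_def)
next
  case (Suc j)
  then show ?case using local_views_correct_Suc by simp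
qed

lemma sim_output_correct:
  assumes "v \<in> V" "within_hops E h u v" "m u v = Some x"
  shows "sim_output p v (m v) (run (sim_rounds p) v) u = Some x"
proof -
  have "n \<noteq> 0" using N_pos by (intro notI) simp
  then have rounds: "sim_rounds p = (h + h) * phase_length p" by (simp add: sim_rounds_def mult_2)
  have "local_known p v (m v) (\<lambda>k. run (sim_rounds p) v ! k) h = local_known p v (m v) (heard v) h"
    using run_nth[of _ "sim_rounds p" v] by (intro local_known_cong) (simp add: rounds)
  also have "\<dots> = known_messages E m h v h"
    using all_local_views_correct[of "2 * h"] \<open>v \<in> V\<close> by (simp add: local_views_correct_def)
  finally have known: "local_known p v (m v) (\<lambda>k. run (sim_rounds p) v ! k) h = known_messages E m h v h" .
  have "u \<in> hop_ball E v h" using within_hops_imp_in_hop_ball[OF G assms(2)] .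
  then have "(u, v, y) \<in> known_messages E m h v h \<longleftrightarrow> m u v = Some y" for y
    by (simp add: known_messages_def)
  then show ?thesis using assms(3) by (simp add: sim_output_def known)
qed

end

lemma within_hops_distinct_imp_pos:
  assumes G: "undirected_graph V E" and "max_degree_is V E \<Delta>"
    and "u \<in> V" "u \<noteq> v" "within_hops E h u v"
  shows "h \<ge> 1" "\<Delta> \<ge> 1"
proof -
  obtain k where k: "k \<le> h" "(u, v) \<in> {(x, y). E x y} ^^ k"
    using assms(5) by (auto simp: within_hops_def)
  then obtain k' where "k = Suc k'" using \<open>u \<noteq> v\<close> by (cases k) auto
  with k(2) have "(u, v) \<in> {(x, y). E x y} ^^ Suc k'" by simp
  from relpow_Suc_D2[OF this] obtain z where "E u z" by blast
  then have "degree E u \<ge> 1"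
    using finite_neighbours[OF G, of u] by (auto simp: degree_def Suc_le_eq card_gt_0_iff)
  then show "\<Delta> \<ge> 1" using assms(2,3) by (auto simp: max_degree_is_def)
  show "h \<ge> 1" using k(1) \<open>k = Suc k'\<close> by simp
qed

lemma sim_solves_simulation:
  assumes "undirected_graph V E" "V \<subseteq> {1..nat \<lfloor>real n powr c\<rfloor>}" "max_degree_is V E \<Delta>"
    and "\<forall>u v x. m u v = Some x \<longrightarrow> length x \<le> B"
  shows "solves_simulation sim_beep sim_output (n, c, \<Delta>, h, B) (sim_rounds (n, c, \<Delta>, h, B)) V E m"
  unfolding solves_simulation_def Let_def fst_conv snd_conv
proof (intro ballI allI impI)
  fix u v x assume "u \<in> V" "v \<in> V" "u \<noteq> v" "within_hops E h u v" "m u v = Some x"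
  moreover have "h \<ge> 1" "\<Delta> \<ge> 1"
    using within_hops_distinct_imp_pos[OF assms(1,3)] calculation by blast+
  ultimately interpret simulation_instance n c \<Delta> h B V E m
    using assms by unfold_locales auto
  show "sim_output (n, c, \<Delta>, h, B) v (m v) (run (sim_rounds p) v) u = Some x"
    using sim_output_correct \<open>v \<in> V\<close> \<open>within_hops E h u v\<close> \<open>m u v = Some x\<close> by blast
qed

section \<open>Round complexity\<close>

lemma id_bits_le_log:
  assumes "n \<ge> 1" "c \<ge> 1"
  shows "real (id_bits (n, c, \<Delta>, h, B)) \<le> (c + 3) * log 2 (real n + 1)"
proof -
  define x where "x = real n powr c"
  define N where "N = nat \<lfloor>x\<rfloor>"
  have "x \<ge> 1" using assms by (simp add: x_def ge_one_powr_ge_zero)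
  have "real N \<le> x" using \<open>x \<ge> 1\<close> by (simp add: N_def)
  have "0 \<le> log 2 (real N + 2)" by simp
  then have "real (id_bits (n, c, \<Delta>, h, B)) = \<lceil>log 2 (real N + 2)\<rceil>"
    unfolding id_bits_def id_bound_def fst_conv snd_conv x_def[symmetric] N_def[symmetric] by simp
  also have "\<dots> \<le> log 2 (real N + 2) + 1" by linarith
  also have "log 2 (real N + 2) \<le> log 2 (4 * x)"
    using \<open>x \<ge> 1\<close> \<open>real N \<le> x\<close> by (subst log_le_cancel_iff) auto
  also have "log 2 (4 * x) = 2 + c * log 2 (real n)"
  proof -
    have "log 2 (4 :: real) = 2" using log_pow_cancel[of 2 2] by simp
    then show ?thesis using \<open>x \<ge> 1\<close> assms(1) by (simp add: log_mult x_def log_powr)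
  qed
  also have "c * log 2 (real n) \<le> c * log 2 (real n + 1)"
    using assms by (intro mult_left_mono) auto
  also have "2 + c * log 2 (real n + 1) + 1 \<le> (c + 3) * log 2 (real n + 1)"
  proof -
    have "log 2 (real n + 1) \<ge> 1" using assms(1) by simp
    then show ?thesis by (simp add: algebra_simps)
  qed
  finally show ?thesis by simp
qed

lemma sim_rounds_le_id_bits:
  assumes "B \<ge> 1"
  shows "sim_rounds (n, c, \<Delta>, h, B) \<le> 256 * h * B * \<Delta> ^ (h + 2) * id_bits (n, c, \<Delta>, h, B) ^ 2"
proof (cases "n = 0 \<or> \<Delta> = 0")
  case False
  define a where "a = id_bits (n, c, \<Delta>, h, B)"
  have "a \<ge> 1" unfolding a_def by (rule id_bits_pos)
  have "sim_rounds (n, c, \<Delta>, h, B) = 32 * h * a * \<Delta> * \<Delta> ^ h * ((\<Delta> + 1) * (2 * a + B + 1))"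
    using False
    by (simp add: sim_rounds_def phase_length_def num_slots_def num_colourings_def num_colours_def
        slot_length_def code_length_def capacity_def hops_of_def max_deg_of_def bits_of_def a_def
        algebra_simps)
  also have "\<dots> \<le> 32 * h * a * \<Delta> * \<Delta> ^ h * ((2 * \<Delta>) * (4 * a * B))"
  proof -
    have "2 * a \<le> 2 * a * B" "B \<le> a * B" "1 \<le> a * B" using \<open>a \<ge> 1\<close> assms by simp_all
    then have "2 * a + B + 1 \<le> 4 * a * B" by linarith
    then show ?thesis using False by (intro mult_left_mono mult_mono) auto
  qed
  also have "\<dots> = 256 * h * B * \<Delta> ^ (h + 2) * a ^ 2"
    by (simp add: algebra_simps power2_eq_square)
  finally show ?thesis by (simp add: a_def)
qed (auto simp: sim_rounds_def phase_length_def num_slots_def num_colours_def max_deg_of_def)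

lemma sim_rounds_le:
  assumes "c \<ge> 1" "B \<ge> 1"
  shows "real (sim_rounds (n, c, \<Delta>, h, B))
           \<le> 256 * (c + 3) ^ 2 * real h * real B * real \<Delta> ^ (h + 2) * log 2 (real n + 1) ^ 2"
proof (cases "n = 0")
  case False
  have "real (sim_rounds (n, c, \<Delta>, h, B))
          \<le> 256 * real h * real B * real \<Delta> ^ (h + 2) * real (id_bits (n, c, \<Delta>, h, B)) ^ 2"
    using sim_rounds_le_id_bits[OF assms(2)] by (metis of_nat_le_iff of_nat_mult of_nat_numeral of_nat_power)
  also have "\<dots> \<le> 256 * real h * real B * real \<Delta> ^ (h + 2) * ((c + 3) * log 2 (real n + 1)) ^ 2"
    using id_bits_le_log[of n c] False assms(1) by (intro mult_left_mono power_mono) auto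
  also have "\<dots> = 256 * (c + 3) ^ 2 * real h * real B * real \<Delta> ^ (h + 2) * log 2 (real n + 1) ^ 2"
    by (simp add: power_mult_distrib)
  finally show ?thesis .
qed (simp add: sim_rounds_def)

theorem theorem8:
  shows "\<exists>(k::nat) (act::beep_rule) (out::output_rule) (T::params \<Rightarrow> nat).
    \<forall>c::real. c \<ge> 1 \<longrightarrow> (\<exists>C::real. C > 0 \<and>
      (\<forall>n \<Delta> h B V E m.
         undirected_graph V E \<longrightarrow> card V = n \<longrightarrow> V \<subseteq> {1..nat \<lfloor>real n powr c\<rfloor>} \<longrightarrow>
         max_degree_is V E \<Delta> \<longrightarrow> B \<ge> 1 \<longrightarrow>
         (\<forall>u v x. m u v = Some x \<longrightarrow> length x \<le> B) \<longrightarrow>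
         solves_simulation act out (n, c, \<Delta>, h, B) (T (n, c, \<Delta>, h, B)) V E m \<and>
         real (T (n, c, \<Delta>, h, B))
           \<le> C * real h * real B * real \<Delta> ^ (h + 2) * (log 2 (real n + 1)) ^ k))"
  apply (rule exI[of _ "2 :: nat"])
  apply (intro exI[of _ sim_beep] exI[of _ sim_output] exI[of _ sim_rounds] allI impI)
  subgoal for c
    using sim_solves_simulation sim_rounds_le
    by (intro exI[of _ "256 * (c + 3) ^ 2"]) (auto simp: add_pos_nonneg)
  done

end
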